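(* Let $I\subset C_+$ be a closed interval (arc) and suppose that either ($-$) the first positive hitting time of points of $I$ with $S_-$ defines a continuous function $\tau:I\to\mathbb{R}_{>0}$ and for every $q\in I$ the flow line $Fl_t(q)$ intersects $S_-$ transversely at $t=\tau(q)$, or ($+$) the same holds with $S_+$ in place of $S_-$. Let $h(q)=Fl_{\tau(q)}(q)$ and define the slope function $s_I=\mathrm{pr}_{w_2}\circ h$ in case ($-$) and $s_I=\mathrm{pr}_{w_1}\circ h$ in case ($+$). If $s_I(p_0)=0$ for some $p_0\in I$, then $p_0$ is the initial point of a symmetric periodic orbit.
   Context: Levi-Civita regularized restricted three-body problem: on $\mathbb{R}^4=\{(z_1,z_2,w_1,w_2)\}$ with symplectic form $dw\wedge dz$, $K_{\mu,c}=\tfrac12|w|^2+c|z|^2-\tfrac{1-\mu}{2}+2|z|^2(z_1w_2-z_2w_1)-\mu(z_1w_2+z_2w_1)-\frac{\mu|z|^2}{|2z^2-1|}$ (complex notation $z=z_1+iz_2$), with $-c$ below the smallest critical value of the Jacobi Hamiltonian; $\Sigma_{\mu,c}$ is the compact component of $K_{\mu,c}^{-1}(0)$ containing $\{z=0\}$ and $Fl_t$ the flow of $X_{K_{\mu,c}}$ on it. $R_+(z,w)=(\bar z,-\bar w)$, $R_-(z,w)=(-\bar z,\bar w)$ are anti-symplectic involutions preserving $K_{\mu,c}$; $C_\pm=\mathrm{Fix}(R_\pm)\cap\Sigma_{\mu,c}$, so $C_+=\{z_2=0,w_1=0\}\cap\Sigma_{\mu,c}$, $C_-=\{z_1=0,w_2=0\}\cap\Sigma_{\mu,c}$.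 $S_+=\{z_2=0\}\cap\Sigma_{\mu,c}$, $S_-=\{z_1=0\}\cap\Sigma_{\mu,c}$. A $T$-periodic orbit $\gamma$ is symmetric if, for some $R\in\{R_+,R_-\}$ and after a time shift, $R(\gamma(T-t))=\gamma(t)$. *)

theory Defs
  imports "HOL-Analysis.Analysis"
begin

text \<open>Phase space R^4 with coordinates (z1,z2,w1,w2) = (x$1, x$2, x$3, x$4).\<close>

definition zc :: "real^4 \<Rightarrow> complex" where
  "zc x = Complex (x$1) (x$2)"

definition K :: "real \<Rightarrow> real \<Rightarrow> real^4 \<Rightarrow> real" where
  "K \<mu> c x =
     (let z1 = x$1; z2 = x$2; w1 = x$3; w2 = x$4; r = z1^2 + z2^2 in
      (w1^2 + w2^2) / 2 + c * r - (1 - \<mu>) / 2 + 2 * r * (z1 * w2 - z2 * w1)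
      - \<mu> * (z1 * w2 + z2 * w1) - \<mu> * r / cmod (2 * (zc x)^2 - 1))"

definition LC_level :: "real \<Rightarrow> real \<Rightarrow> (real^4) set" where
  "LC_level \<mu> c = {x. 2 * (zc x)^2 \<noteq> 1 \<and> K \<mu> c x = 0}"

definition Sigma :: "real \<Rightarrow> real \<Rightarrow> (real^4) set" where
  "Sigma \<mu> c = \<Union>{connected_component_set (LC_level \<mu> c) x | x.
                    x \<in> LC_level \<mu> c \<and> x$1 = 0 \<and> x$2 = 0}"

definition pd :: "(real^4 \<Rightarrow> real) \<Rightarrow> 4 \<Rightarrow> real^4 \<Rightarrow> real" where
  "pd f i x = deriv (\<lambda>s. f (x + s *\<^sub>R axis i 1)) 0"

text \<open>Hamiltonian vector field of K for the symplectic form dw /\ dz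
  (convention: dz/dt = dK/dw, dw/dt = - dK/dz).\<close>
definition XK :: "real \<Rightarrow> real \<Rightarrow> real^4 \<Rightarrow> real^4" where
  "XK \<mu> c x = vector [pd (K \<mu> c) 3 x, pd (K \<mu> c) 4 x, - pd (K \<mu> c) 1 x, - pd (K \<mu> c) 2 x]"

definition is_flow :: "real \<Rightarrow> real \<Rightarrow> (real \<Rightarrow> real^4 \<Rightarrow> real^4) \<Rightarrow> bool" where
  "is_flow \<mu> c Fl \<longleftrightarrow>
     (\<forall>q \<in> Sigma \<mu> c. Fl 0 q = q \<and>
        (\<forall>t. ((\<lambda>s. Fl s q) has_vector_derivative XK \<mu> c (Fl t q)) (at t)))"

text \<open>Jacobi Hamiltonian of the rotating Kepler/restricted three-body problem
  (earth of mass 1-mu at 0, moon of mass mu at (1,0)), coordinates (q1,q2,p1,p2);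
  K = |z|^2 (H o L + c) for the Levi-Civita map L(z,w) = (2 z^2, w / conj z).\<close>
definition Hjac :: "real \<Rightarrow> real^4 \<Rightarrow> real" where
  "Hjac \<mu> x =
     (let q1 = x$1; q2 = x$2; p1 = x$3; p2 = x$4 in
      (p1^2 + p2^2) / 2 - (1 - \<mu>) / sqrt (q1^2 + q2^2) - \<mu> / sqrt ((q1 - 1)^2 + q2^2)
      + q1 * p2 - q2 * p1 - \<mu> * p2)"

definition Hjac_domain :: "(real^4) set" where
  "Hjac_domain = {x. (x$1, x$2) \<noteq> (0, 0) \<and> (x$1, x$2) \<noteq> (1, 0)}"

definition below_critical :: "real \<Rightarrow> real \<Rightarrow> bool" where
  "below_critical \<mu> c \<longleftrightarrow>
     (\<forall>x \<in> Hjac_domain. (Hjac \<mu> has_derivative (\<lambda>v. 0)) (at x) \<longrightarrow> - c < Hjac \<mu> x)"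

definition Rplus :: "real^4 \<Rightarrow> real^4" where
  "Rplus x = vector [x$1, - x$2, - x$3, x$4]"

definition Rminus :: "real^4 \<Rightarrow> real^4" where
  "Rminus x = vector [- x$1, x$2, x$3, - x$4]"

definition C_plus :: "real \<Rightarrow> real \<Rightarrow> (real^4) set" where
  "C_plus \<mu> c = {x \<in> Sigma \<mu> c. x$2 = 0 \<and> x$3 = 0}"

definition S_plus :: "real \<Rightarrow> real \<Rightarrow> (real^4) set" where
  "S_plus \<mu> c = {x \<in> Sigma \<mu> c. x$2 = 0}"

definition S_minus :: "real \<Rightarrow> real \<Rightarrow> (real^4) set" where
  "S_minus \<mu> c = {x \<in> Sigma \<mu> c. x$1 = 0}"

text \<open>tau is the first positive hitting time of I with S (= Sigma \<inter> {x$k = 0}),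
  continuous on I, and the flow line crosses S transversely there
  (the k-th component of X_K at the hitting point is nonzero).\<close>
definition first_hit_transverse ::
  "real \<Rightarrow> real \<Rightarrow> (real \<Rightarrow> real^4 \<Rightarrow> real^4) \<Rightarrow> (real^4) set \<Rightarrow> 4
     \<Rightarrow> (real^4) set \<Rightarrow> (real^4 \<Rightarrow> real) \<Rightarrow> bool" where
  "first_hit_transverse \<mu> c Fl S k I \<tau> \<longleftrightarrow>
     continuous_on I \<tau> \<and>
     (\<forall>q \<in> I. 0 < \<tau> q \<and> Fl (\<tau> q) q \<in> S \<and>
        (\<forall>t. 0 < t \<and> t < \<tau> q \<longrightarrow> Fl t q \<notin> S) \<and>
        XK \<mu> c (Fl (\<tau> q) q) $ k \<noteq> 0)"

definition symmetric_periodic_point ::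
  "(real \<Rightarrow> real^4 \<Rightarrow> real^4) \<Rightarrow> real^4 \<Rightarrow> bool" where
  "symmetric_periodic_point Fl p \<longleftrightarrow>
     (\<exists>T > 0. (\<forall>t. Fl (t + T) p = Fl t p) \<and>
        (\<exists>R \<in> {Rplus, Rminus}. \<exists>s. \<forall>t. R (Fl (T - t + s) p) = Fl (t + s) p))"

end

theory Submission
  imports Defs
begin

(* Both involutions R_+ and R_- leave K invariant and are anti-symplectic, so the Hamiltonian
   field X of K satisfies X (R x) = - R (X x): if y solves y' = X y, so does t \<mapsto> R (y (a - t)).
   Away from the collision set 2 z^2 = 1 the field X is locally Lipschitz, so solutions are unique;
   and a flow line starting in Sigma never reaches that set, since K is conserved and the zero level
   of K is closed (near a collision the term \<mu> |z|^2 / |2 z^2 - 1| blows up). Hence a flow line y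
   through a fixed point of R at time a satisfies y (a + t) = R (y (a - t)). For p0 \<in> C_+ this holds
   with R_+ at a = 0; a zero of the slope means that the hitting point y (\<tau>) is fixed by R_-
   (resp. R_+), so it holds at a = \<tau> as well. Composing the two reflections gives
   y (t + 2 \<tau>) = R (R_+ (y t)), and since R \<circ> R_+ is an involution the orbit is 4\<tau>-periodic
   and R_+-symmetric. *)

section \<open>Lipschitz continuity on compact sets\<close>

definition lipschitzian_on :: "'a::metric_space set \<Rightarrow> ('a \<Rightarrow> 'b::metric_space) \<Rightarrow> bool" where
  "lipschitzian_on S f \<longleftrightarrow> (\<exists>L. L-lipschitz_on S f)"

lemma lipschitzian_onI: "L-lipschitz_on S f \<Longrightarrow> lipschitzian_on S f"
  unfolding lipschitzian_on_def by blast

lemma lipschitzian_on_const: "lipschitzian_on S (\<lambda>x. c)"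
  by (rule lipschitzian_onI[OF lipschitz_on_constant])

lemma lipschitzian_on_vec_nth: "lipschitzian_on S (\<lambda>x. x $ i)"
  by (rule lipschitzian_onI[of 1]) (simp add: lipschitz_onI dist_vec_nth_le)

lemma lipschitzian_on_add:
  fixes f g :: "'a::metric_space \<Rightarrow> 'b::real_normed_vector"
  shows "lipschitzian_on S f \<Longrightarrow> lipschitzian_on S g \<Longrightarrow> lipschitzian_on S (\<lambda>x. f x + g x)"
  unfolding lipschitzian_on_def by (blast intro: lipschitz_on_add)

lemma lipschitzian_on_diff:
  fixes f g :: "'a::metric_space \<Rightarrow> 'b::real_normed_vector"
  shows "lipschitzian_on S f \<Longrightarrow> lipschitzian_on S g \<Longrightarrow> lipschitzian_on S (\<lambda>x. f x - g x)"
  unfolding lipschitzian_on_def by (blast intro: lipschitz_on_diff)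

lemma lipschitzian_on_minus:
  fixes f :: "'a::metric_space \<Rightarrow> 'b::real_normed_vector"
  shows "lipschitzian_on S f \<Longrightarrow> lipschitzian_on S (\<lambda>x. - f x)"
  unfolding lipschitzian_on_def by (blast intro: lipschitz_on_minus)

lemma lipschitzian_on_mult:
  fixes f g :: "'a::metric_space \<Rightarrow> real"
  assumes "compact S" and f: "lipschitzian_on S f" and g: "lipschitzian_on S g"
  shows "lipschitzian_on S (\<lambda>x. f x * g x)"
proof -
  obtain Lf Lg where Lf: "Lf-lipschitz_on S f" and Lg: "Lg-lipschitz_on S g"
    using f g unfolding lipschitzian_on_def by blast
  have "bounded (f ` S)" "bounded (g ` S)"
    using Lf Lg \<open>compact S\<close> by (auto intro: compact_imp_bounded compact_continuous_image
        lipschitz_on_continuous_on)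
  then obtain Bf Bg where Bf: "\<And>x. x \<in> S \<Longrightarrow> \<bar>f x\<bar> \<le> Bf" and Bg: "\<And>x. x \<in> S \<Longrightarrow> \<bar>g x\<bar> \<le> Bg"
    and "0 < Bf" "0 < Bg"
    unfolding bounded_pos by (metis image_eqI real_norm_def)
  have "(Bf * Lg + Bg * Lf)-lipschitz_on S (\<lambda>x. f x * g x)"
  proof (rule lipschitz_onI)
    fix x y assume xy: "x \<in> S" "y \<in> S"
    have "\<bar>f x * g x - f y * g y\<bar> = \<bar>f x * (g x - g y) + g y * (f x - f y)\<bar>"
      by (simp add: algebra_simps)
    also have "\<dots> \<le> Bf * (Lg * dist x y) + Bg * (Lf * dist x y)"
      using lipschitz_onD[OF Lf xy] lipschitz_onD[OF Lg xy] Bf[OF xy(1)] Bg[OF xy(2)]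
      unfolding dist_real_def
      by (intro order_trans[OF abs_triangle_ineq] add_mono)
        (simp_all add: abs_mult mult_mono')
    finally show "dist (f x * g x) (f y * g y) \<le> (Bf * Lg + Bg * Lf) * dist x y"
      by (simp add: dist_real_def algebra_simps)
  next
    show "0 \<le> Bf * Lg + Bg * Lf"
      using \<open>0 < Bf\<close> \<open>0 < Bg\<close> Lf Lg by (simp add: lipschitz_on_def)
  qed
  then show ?thesis by (rule lipschitzian_onI)
qed

lemma lipschitzian_on_power:
  fixes f :: "'a::metric_space \<Rightarrow> real"
  shows "compact S \<Longrightarrow> lipschitzian_on S f \<Longrightarrow> lipschitzian_on S (\<lambda>x. f x ^ n)"
  by (induction n) (simp_all add: lipschitzian_on_const lipschitzian_on_mult)

lemma lipschitzian_on_compose: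
  "lipschitzian_on S f \<Longrightarrow> f ` S \<subseteq> T \<Longrightarrow> L-lipschitz_on T g \<Longrightarrow> lipschitzian_on S (\<lambda>x. g (f x))"
  unfolding lipschitzian_on_def by (metis lipschitz_on_compose2 lipschitz_on_subset)

lemma lipschitz_on_sqrt:
  assumes "0 < \<delta>"
  shows "(1 / (2 * sqrt \<delta>))-lipschitz_on {\<delta>..} sqrt"
proof (rule lipschitz_onI)
  fix a b :: real assume "a \<in> {\<delta>..}" "b \<in> {\<delta>..}"
  then have le: "sqrt \<delta> \<le> sqrt a" "sqrt \<delta> \<le> sqrt b"
    and eq: "a - b = (sqrt a - sqrt b) * (sqrt a + sqrt b)"
    using assms by (simp_all add: algebra_simps)
  have "\<bar>sqrt a - sqrt b\<bar> * (2 * sqrt \<delta>) \<le> \<bar>sqrt a - sqrt b\<bar> * (sqrt a + sqrt b)"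
    using le by (intro mult_left_mono) (linarith, simp)
  also have "\<dots> = \<bar>a - b\<bar>"
    using le eq assms by (simp add: abs_mult)
  finally show "dist (sqrt a) (sqrt b) \<le> 1 / (2 * sqrt \<delta>) * dist a b"
    using assms by (simp add: dist_real_def field_simps)
qed (use assms in simp)

lemma lipschitz_on_inverse:
  assumes "0 < \<delta>"
  shows "(1 / \<delta>\<^sup>2)-lipschitz_on {x::real. \<delta> \<le> \<bar>x\<bar>} inverse"
proof (rule lipschitz_onI)
  fix a b :: real assume "a \<in> {x. \<delta> \<le> \<bar>x\<bar>}" "b \<in> {x. \<delta> \<le> \<bar>x\<bar>}"
  then have ab: "\<delta> \<le> \<bar>a\<bar>" "\<delta> \<le> \<bar>b\<bar>" by auto
  then have "\<delta>\<^sup>2 \<le> \<bar>a * b\<bar>"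
    using assms by (simp add: abs_mult power2_eq_square mult_mono')
  moreover have "\<bar>inverse a - inverse b\<bar> = \<bar>a - b\<bar> / \<bar>a * b\<bar>"
    using ab assms by (simp add: inverse_diff_inverse abs_minus_commute divide_inverse abs_mult
        mult.commute)
  moreover have "0 < \<bar>a * b\<bar> * \<delta>\<^sup>2"
    using ab assms by (simp add: abs_mult)
  ultimately show "dist (inverse a) (inverse b) \<le> 1 / \<delta>\<^sup>2 * dist a b"
    by (simp add: dist_real_def divide_left_mono)
qed simp

lemma lipschitzian_on_inverse_sqrt:
  fixes f :: "'a::metric_space \<Rightarrow> real"
  assumes "lipschitzian_on S f" "0 < \<delta>" "\<And>x. x \<in> S \<Longrightarrow> \<delta> \<le> f x"
  shows "lipschitzian_on S (\<lambda>x. inverse (sqrt (f x)))"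
proof -
  have "lipschitzian_on S (\<lambda>x. sqrt (f x))"
    using assms by (intro lipschitzian_on_compose[OF _ _ lipschitz_on_sqrt]) auto
  then show ?thesis
    using assms by (intro lipschitzian_on_compose[OF _ _ lipschitz_on_inverse[of "sqrt \<delta>"]])
      (auto intro: order_trans[OF real_sqrt_le_mono abs_ge_self])
qed

lemma lipschitzian_on_cart:
  fixes f :: "'a::metric_space \<Rightarrow> real^'n"
  assumes "\<And>i. lipschitzian_on S (\<lambda>x. f x $ i)"
  shows "lipschitzian_on S f"
proof -
  obtain L where L: "\<And>i. (L i)-lipschitz_on S (\<lambda>x. f x $ i)"
    using assms unfolding lipschitzian_on_def by metis
  have "(\<Sum>i\<in>UNIV. L i)-lipschitz_on S f"
  proof (rule lipschitz_onI)
    fix x y assume "x \<in> S" "y \<in> S"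
    have "dist (f x) (f y) \<le> (\<Sum>i\<in>UNIV. \<bar>(f x - f y) $ i\<bar>)"
      unfolding dist_norm by (rule norm_le_l1_cart)
    also have "\<dots> \<le> (\<Sum>i\<in>UNIV. L i * dist x y)"
      using lipschitz_onD[OF L \<open>x \<in> S\<close> \<open>y \<in> S\<close>] by (intro sum_mono) (simp add: dist_real_def)
    finally show "dist (f x) (f y) \<le> (\<Sum>i\<in>UNIV. L i) * dist x y"
      by (simp add: sum_distrib_right)
  next
    show "0 \<le> (\<Sum>i\<in>UNIV. L i)"
      using L by (simp add: lipschitz_on_def sum_nonneg)
  qed
  then show ?thesis by (rule lipschitzian_onI)
qed

section \<open>Uniqueness of solutions of autonomous ODEs\<close>

lemma gronwall_vanishing:
  fixes u u' :: "real \<Rightarrow> real"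
  assumes "t0 \<le> t"
    and deriv: "\<And>s. s \<in> {t0..t} \<Longrightarrow> (u has_real_derivative u' s) (at s)"
    and bound: "\<And>s. s \<in> {t0..t} \<Longrightarrow> u' s \<le> C * u s"
    and "0 \<le> u t" and "u t0 = 0"
  shows "u t = 0"
proof -
  define v where "v s = exp (- C * s) * u s" for s
  have "v t \<le> v t0"
  proof (rule DERIV_nonpos_imp_nonincreasing[OF \<open>t0 \<le> t\<close>])
    fix s assume "t0 \<le> s" "s \<le> t"
    then have s: "s \<in> {t0..t}" by simp
    have "(v has_real_derivative exp (- C * s) * (u' s - C * u s)) (at s)"
      unfolding v_def by (rule derivative_eq_intros deriv[OF s] refl)+ (simp add: algebra_simps)
    moreover have "exp (- C * s) * (u' s - C * u s) \<le> 0"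
      using bound[OF s] by (simp add: mult_nonneg_nonpos)
    ultimately show "\<exists>y. (v has_real_derivative y) (at s) \<and> y \<le> 0" by blast
  qed
  then have "u t \<le> 0"
    using \<open>u t0 = 0\<close> by (simp add: v_def mult_le_0_iff)
  with \<open>0 \<le> u t\<close> show ?thesis by linarith
qed

lemma gronwall_vanishing_ball:
  fixes u u' :: "real \<Rightarrow> real"
  assumes deriv: "\<And>s. s \<in> ball t0 e \<Longrightarrow> (u has_real_derivative u' s) (at s)"
    and bound: "\<And>s. s \<in> ball t0 e \<Longrightarrow> \<bar>u' s\<bar> \<le> C * u s"
    and "\<And>s. 0 \<le> u s" and "u t0 = 0" and "t \<in> ball t0 e"
  shows "u t = 0"
proof (cases "t0 \<le> t")
  case True
  have "{t0..t} \<subseteq> ball t0 e"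
    using \<open>t \<in> ball t0 e\<close> by (auto simp: dist_real_def)
  with True show ?thesis
    using assms by (intro gronwall_vanishing[of t0 t u u' C]) (auto simp: abs_le_iff)
next
  case False
  have mirror: "- s \<in> ball t0 e" if "s \<in> {- t0..- t}" for s
    using that \<open>t \<in> ball t0 e\<close> by (auto simp: dist_real_def)
  have "u (- (- t)) = 0"
  proof (rule gronwall_vanishing[of "- t0" "- t" "\<lambda>s. u (- s)" "\<lambda>s. - u' (- s)" C])
    fix s assume "s \<in> {- t0..- t}"
    then have "- s \<in> ball t0 e" by (rule mirror)
    then show "((\<lambda>s. u (- s)) has_real_derivative - u' (- s)) (at s)"
      and "- u' (- s) \<le> C * u (- s)"
      using deriv[of "- s"] bound[of "- s"] by (simp_all add: DERIV_mirror[symmetric] abs_le_iff)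
  qed (use False assms in auto)
  then show ?thesis by simp
qed

lemma ode_solutions_eq_near:
  fixes F :: "'a::real_inner \<Rightarrow> 'a"
  assumes lip: "local_lipschitz (UNIV :: real set) U (\<lambda>_. F)"
    and y1: "\<And>t. (y1 has_vector_derivative F (y1 t)) (at t)"
    and y2: "\<And>t. (y2 has_vector_derivative F (y2 t)) (at t)"
    and in_U: "\<And>t. y1 t \<in> U" "\<And>t. y2 t \<in> U"
    and "y1 t0 = y2 t0"
  shows "\<exists>e>0. \<forall>t\<in>ball t0 e. y1 t = y2 t"
proof -
  obtain \<rho> L where "0 < \<rho>" and L: "L-lipschitz_on (cball (y1 t0) \<rho> \<inter> U) F"
    using local_lipschitzE[OF lip UNIV_I in_U(1)] by (metis Int_UNIV_right centre_in_cball less_imp_le)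
  have "open {t. dist (y1 t0) (y1 t) < \<rho> \<and> dist (y1 t0) (y2 t) < \<rho>}"
    using y1 y2 by (intro open_Collect_conj open_Collect_less continuous_intros
        continuous_at_imp_continuous_on ballI has_vector_derivative_continuous)
  moreover have "t0 \<in> {t. dist (y1 t0) (y1 t) < \<rho> \<and> dist (y1 t0) (y2 t) < \<rho>}"
    using \<open>0 < \<rho>\<close> \<open>y1 t0 = y2 t0\<close> by simp
  ultimately obtain e where "0 < e"
    and "ball t0 e \<subseteq> {t. dist (y1 t0) (y1 t) < \<rho> \<and> dist (y1 t0) (y2 t) < \<rho>}"
    using open_contains_ball by blast
  then have near: "y1 t \<in> cball (y1 t0) \<rho> \<and> y2 t \<in> cball (y1 t0) \<rho>" if "t \<in> ball t0 e" for t
    using that by auto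
  define u where "u t = (y1 t - y2 t) \<bullet> (y1 t - y2 t)" for t
  define u' where "u' t = 2 * ((y1 t - y2 t) \<bullet> (F (y1 t) - F (y2 t)))" for t
  have "(u has_real_derivative u' t) (at t)" for t
  proof -
    have "((\<lambda>t. y1 t - y2 t) has_vector_derivative F (y1 t) - F (y2 t)) (at t)"
      by (intro has_vector_derivative_diff y1 y2)
    from bounded_bilinear.has_vector_derivative[OF bounded_bilinear_inner this this]
    show ?thesis
      unfolding u_def u'_def has_real_derivative_iff_has_vector_derivative
      by (simp add: inner_commute)
  qed
  moreover have "\<bar>u' t\<bar> \<le> 2 * L * u t" if "t \<in> ball t0 e" for t
  proof -
    have "norm (F (y1 t) - F (y2 t)) \<le> L * norm (y1 t - y2 t)"
      using lipschitz_onD[OF L] near[OF that] in_U by (simp add: dist_norm)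
    moreover have "\<bar>u' t\<bar> \<le> 2 * (norm (y1 t - y2 t) * norm (F (y1 t) - F (y2 t)))"
      unfolding u'_def using Cauchy_Schwarz_ineq2 by (simp add: abs_mult)
    ultimately have "\<bar>u' t\<bar> \<le> 2 * (norm (y1 t - y2 t) * (L * norm (y1 t - y2 t)))"
      by (smt (verit) mult_left_mono norm_ge_zero)
    then show ?thesis
      by (simp add: u_def power2_norm_eq_inner[symmetric] power2_eq_square algebra_simps)
  qed
  ultimately have "u t = 0" if "t \<in> ball t0 e" for t
    using gronwall_vanishing_ball[of t0 e u u' "2 * L" t] that \<open>y1 t0 = y2 t0\<close>
    by (simp add: u_def)
  then show ?thesis
    using \<open>0 < e\<close> by (auto simp: u_def)
qed

lemma ode_solutions_eq:
  fixes F :: "'a::real_inner \<Rightarrow> 'a"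
  assumes lip: "local_lipschitz (UNIV :: real set) U (\<lambda>_. F)"
    and y1: "\<And>t. (y1 has_vector_derivative F (y1 t)) (at t)"
    and y2: "\<And>t. (y2 has_vector_derivative F (y2 t)) (at t)"
    and in_U: "\<And>t. y1 t \<in> U" "\<And>t. y2 t \<in> U"
    and "y1 a = y2 a"
  shows "y1 t = y2 t"
proof -
  define E where "E = {t. y1 t = y2 t}"
  have "closed E"
    unfolding E_def using y1 y2
    by (intro closed_Collect_eq continuous_at_imp_continuous_on ballI has_vector_derivative_continuous)
  moreover have "open E"
    unfolding open_contains_ball
  proof
    fix t0 assume "t0 \<in> E"
    then obtain e where "0 < e" and "\<forall>t\<in>ball t0 e. y1 t = y2 t"
      using ode_solutions_eq_near[OF lip y1 y2 in_U] by (auto simp: E_def)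
    then show "\<exists>e>0. ball t0 e \<subseteq> E"
      by (auto simp: E_def)
  qed
  moreover have "a \<in> E"
    using \<open>y1 a = y2 a\<close> by (simp add: E_def)
  ultimately have "E = UNIV"
    using clopen by blast
  then have "t \<in> E" by simp
  then show ?thesis by (simp add: E_def)
qed

section \<open>Reversible systems and first integrals\<close>

lemma reversed_solution:
  assumes "bounded_linear R" and reverses: "\<And>x. F (R x) = - R (F x)"
    and sol: "\<And>t. (y has_vector_derivative F (y t)) (at t)"
  shows "((\<lambda>s. R (y (a - s))) has_vector_derivative F (R (y (a - t)))) (at t)"
proof -
  have "((y \<circ> (\<lambda>s. a - s)) has_vector_derivative (-1) *\<^sub>R F (y (a - t))) (at t)"
    by (rule vector_diff_chain_at[OF _ sol]) (rule derivative_eq_intros refl | simp)+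
  from bounded_linear.has_vector_derivative[OF \<open>bounded_linear R\<close> this]
  show ?thesis
    by (simp add: o_def reverses linear_neg bounded_linear.linear[OF \<open>bounded_linear R\<close>])
qed

lemma shifted_solution:
  assumes "\<And>t. (y has_vector_derivative F (y t)) (at t)"
  shows "((\<lambda>s. y (a + s)) has_vector_derivative F (y (a + t))) (at t)"
proof -
  have "((y \<circ> (\<lambda>s. a + s)) has_vector_derivative 1 *\<^sub>R F (y (a + t))) (at t)"
    by (rule vector_diff_chain_at[OF _ assms]) (rule derivative_eq_intros refl | simp)+
  then show ?thesis by (simp add: o_def)
qed

lemma reversible_solution_symmetric:
  fixes F :: "'a::real_inner \<Rightarrow> 'a"
  assumes lip: "local_lipschitz (UNIV :: real set) U (\<lambda>_. F)"
    and "bounded_linear R" and reverses: "\<And>x. F (R x) = - R (F x)" and "R ` U \<subseteq> U"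
    and sol: "\<And>t. (y has_vector_derivative F (y t)) (at t)" and in_U: "\<And>t. y t \<in> U"
    and fixed: "R (y a) = y a"
  shows "y (a + t) = R (y (a - t))"
proof (rule ode_solutions_eq[OF lip,
      where ?y1.0 = "\<lambda>s. y (a + s)" and ?y2.0 = "\<lambda>s. R (y (a - s))"])
  show "((\<lambda>s. y (a + s)) has_vector_derivative F (y (a + s))) (at s)" for s
    by (rule shifted_solution[OF sol])
  show "((\<lambda>s. R (y (a - s))) has_vector_derivative F (R (y (a - s)))) (at s)" for s
    using \<open>bounded_linear R\<close> reverses sol by (rule reversed_solution)
  show "y (a + s) \<in> U" "R (y (a - s)) \<in> U" for s
    using in_U \<open>R ` U \<subseteq> U\<close> by auto
  show "y (a + 0) = R (y (a - 0))"
    using fixed by simp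
qed

lemma doubly_symmetric_periodic:
  fixes y :: "real \<Rightarrow> 'a"
  assumes "\<And>t. y (0 + t) = R (y (0 - t))" and "\<And>t. y (a + t) = R' (y (a - t))"
    and "\<And>x. R' (R (R' (R x))) = x"
  shows "y (t + 4 * a) = y t"
proof -
  have shift: "y (s + 2 * a) = R' (R (y s))" for s
  proof -
    have "y (s + 2 * a) = y (a + (s + a))"
      by (simp add: algebra_simps)
    also have "\<dots> = R' (y (- s))"
      using assms(2)[of "s + a"] by simp
    also have "\<dots> = R' (R (y s))"
      using assms(1)[of "- s"] by simp
    finally show ?thesis .
  qed
  have "y (t + 4 * a) = y ((t + 2 * a) + 2 * a)"
    by (simp add: add.commute)
  also have "\<dots> = y t"
    by (simp only: shift assms(3))
  finally show ?thesis .
qed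

lemma level_set_invariant:
  fixes y :: "real \<Rightarrow> 'a::topological_space" and f :: "'a \<Rightarrow> real"
  assumes "open U" and "closed {x \<in> U. f x = k}" and "continuous_on UNIV y"
    and conserved: "\<And>t. y t \<in> U \<Longrightarrow> ((\<lambda>s. f (y s)) has_real_derivative 0) (at t)"
    and "y a \<in> U" and "f (y a) = k"
  shows "y t \<in> U \<and> f (y t) = k"
proof -
  define A where "A = y -` {x \<in> U. f x = k}"
  have "closed A"
    unfolding A_def using assms(2,3) by (rule closed_vimage)
  moreover have "open A"
    unfolding open_contains_ball
  proof
    fix t assume "t \<in> A"
    have "open (y -` U)"
      using \<open>open U\<close> \<open>continuous_on UNIV y\<close> by (rule open_vimage)
    moreover have "t \<in> y -` U"
      using \<open>t \<in> A\<close> by (simp add: A_def)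
    ultimately obtain e where "0 < e" and e: "ball t e \<subseteq> y -` U"
      using open_contains_ball by blast
    have "\<exists>c. \<forall>s\<in>ball t e. f (y s) = c"
      using e by (intro has_field_derivative_zero_constant)
        (auto intro!: has_field_derivative_at_within conserved)
    then obtain c where c: "\<And>s. s \<in> ball t e \<Longrightarrow> f (y s) = c"
      by blast
    moreover have "c = k"
      using c[of t] \<open>0 < e\<close> \<open>t \<in> A\<close> by (simp add: A_def)
    ultimately have "\<forall>s\<in>ball t e. f (y s) = k"
      by blast
    then show "\<exists>e>0. ball t e \<subseteq> A"
      using \<open>0 < e\<close> e by (auto simp: A_def)
  qed
  moreover have "a \<in> A"
    using assms(5,6) by (simp add: A_def)
  ultimately have "A = UNIV"
    using clopen by blast
  then have "t \<in> A" by simp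
  then show ?thesis by (simp add: A_def)
qed

section \<open>The regularized Hamiltonian away from collisions\<close>

lemma vector_4 [simp]:
  "(vector [a, b, c, d] :: 'a::zero^4) $ 1 = a"
  "(vector [a, b, c, d] :: 'a::zero^4) $ 2 = b"
  "(vector [a, b, c, d] :: 'a::zero^4) $ 3 = c"
  "(vector [a, b, c, d] :: 'a::zero^4) $ 4 = d"
  unfolding vector_def by simp_all

lemma vec4_eq_iff: "(x :: 'a^4) = y \<longleftrightarrow> x$1 = y$1 \<and> x$2 = y$2 \<and> x$3 = y$3 \<and> x$4 = y$4"
  by (simp add: vec_eq_iff forall_4)

lemma has_derivative_vec_nth [derivative_intros]:
  "((\<lambda>x. x $ i) has_derivative (\<lambda>v. v $ i)) F"
  by (rule bounded_linear_imp_has_derivative) (rule bounded_linear_vec_nth)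

(* rsq x = |z|^2 and nsq x = |2 z^2 - 1|^2 *)

definition rsq :: "real^4 \<Rightarrow> real" where
  "rsq x = (x$1)\<^sup>2 + (x$2)\<^sup>2"

definition nsq :: "real^4 \<Rightarrow> real" where
  "nsq x = (2 * (x$1)\<^sup>2 - 2 * (x$2)\<^sup>2 - 1)\<^sup>2 + 16 * (x$1)\<^sup>2 * (x$2)\<^sup>2"

definition noncollision :: "(real^4) set" where
  "noncollision = {x. 0 < nsq x}"

definition K_poly :: "real \<Rightarrow> real \<Rightarrow> real^4 \<Rightarrow> real" where
  "K_poly \<mu> c x = ((x$3)\<^sup>2 + (x$4)\<^sup>2) / 2 + c * rsq x - (1 - \<mu>) / 2
     + 2 * rsq x * (x$1 * x$4 - x$2 * x$3) - \<mu> * (x$1 * x$4 + x$2 * x$3)"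

lemma nsq_nonneg: "0 \<le> nsq x"
  by (simp add: nsq_def)

lemma cmod_collision: "cmod (2 * (zc x)\<^sup>2 - 1) = sqrt (nsq x)"
  by (simp add: zc_def nsq_def cmod_def power2_eq_square algebra_simps)

lemma noncollision_iff: "x \<in> noncollision \<longleftrightarrow> 2 * (zc x)\<^sup>2 \<noteq> 1"
proof -
  have "2 * (zc x)\<^sup>2 = 1 \<longleftrightarrow> cmod (2 * (zc x)\<^sup>2 - 1) = 0" by simp
  then show ?thesis
    using nsq_nonneg[of x] by (simp add: noncollision_def cmod_collision less_le)
qed

lemma continuous_on_rsq: "continuous_on UNIV rsq"
  unfolding rsq_def[abs_def] by (intro continuous_intros)

lemma continuous_on_nsq: "continuous_on UNIV nsq"
  unfolding nsq_def[abs_def] by (intro continuous_intros)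

lemma open_noncollision: "open noncollision"
  unfolding noncollision_def by (rule open_Collect_less[OF continuous_on_const continuous_on_nsq])

lemma K_eq: "K \<mu> c x = K_poly \<mu> c x - \<mu> * rsq x * inverse (sqrt (nsq x))"
  unfolding K_def K_poly_def rsq_def cmod_collision Let_def divide_inverse by (rule refl)

lemma LC_level_eq: "LC_level \<mu> c = {x \<in> noncollision. K \<mu> c x = 0}"
  by (simp add: LC_level_def noncollision_iff)

definition gradK :: "real \<Rightarrow> real \<Rightarrow> real^4 \<Rightarrow> real^4" where
  "gradK \<mu> c x =
     (let z1 = x$1; z2 = x$2; w1 = x$3; w2 = x$4; r = rsq x; s = inverse (sqrt (nsq x)) in
      vector [2 * c * z1 + 4 * z1 * (z1 * w2 - z2 * w1) + 2 * r * w2 - \<mu> * w2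
                - \<mu> * (2 * z1 * s - 4 * r * z1 * (2 * r - 1) * s ^ 3),
              2 * c * z2 + 4 * z2 * (z1 * w2 - z2 * w1) - 2 * r * w1 - \<mu> * w1
                - \<mu> * (2 * z2 * s - 4 * r * z2 * (2 * r + 1) * s ^ 3),
              w1 - 2 * r * z2 - \<mu> * z2,
              w2 + 2 * r * z1 - \<mu> * z1])"

lemma rsq_has_derivative: "(rsq has_derivative (\<lambda>v. 2 * x$1 * v$1 + 2 * x$2 * v$2)) (at x)"
  unfolding rsq_def[abs_def] by (auto intro!: derivative_eq_intros)

lemma nsq_has_derivative:
  "(nsq has_derivative
     (\<lambda>v. 8 * x$1 * (2 * rsq x - 1) * v$1 + 8 * x$2 * (2 * rsq x + 1) * v$2)) (at x)"
  unfolding nsq_def[abs_def]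
  by (auto intro!: derivative_eq_intros simp: rsq_def algebra_simps power2_eq_square)

lemma inverse_sqrt_has_real_derivative:
  assumes "0 < t"
  shows "((\<lambda>t. inverse (sqrt t)) has_real_derivative - (inverse (sqrt t) ^ 3) / 2) (at t)"
  using assms by (auto intro!: derivative_eq_intros simp: power3_eq_cube field_simps)

lemma K_poly_has_derivative:
  "(K_poly \<mu> c has_derivative
     (\<lambda>v. (2 * c * x$1 + 4 * x$1 * (x$1 * x$4 - x$2 * x$3) + 2 * rsq x * x$4 - \<mu> * x$4) * v$1
        + (2 * c * x$2 + 4 * x$2 * (x$1 * x$4 - x$2 * x$3) - 2 * rsq x * x$3 - \<mu> * x$3) * v$2
        + (x$3 - 2 * rsq x * x$2 - \<mu> * x$2) * v$3 + (x$4 + 2 * rsq x * x$1 - \<mu> * x$1) * v$4))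
     (at x)"
  unfolding K_poly_def[abs_def]
  by (auto intro!: derivative_eq_intros rsq_has_derivative simp: fun_eq_iff algebra_simps)

lemma inverse_sqrt_nsq_has_derivative:
  assumes "0 < nsq x"
  shows "((\<lambda>x. inverse (sqrt (nsq x))) has_derivative
     (\<lambda>v. - 4 * inverse (sqrt (nsq x)) ^ 3 *
        (x$1 * (2 * rsq x - 1) * v$1 + x$2 * (2 * rsq x + 1) * v$2))) (at x)"
  using has_derivative_compose[OF nsq_has_derivative
      inverse_sqrt_has_real_derivative[OF assms, unfolded has_field_derivative_def]]
  by (rule has_derivative_eq_rhs) (simp add: fun_eq_iff algebra_simps)

lemma K_has_derivative:
  assumes "0 < nsq x"
  shows "(K \<mu> c has_derivative (\<lambda>v. gradK \<mu> c x \<bullet> v)) (at x)"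
proof -
  have "((\<lambda>x. K_poly \<mu> c x - \<mu> * rsq x * inverse (sqrt (nsq x))) has_derivative
      (\<lambda>v. gradK \<mu> c x \<bullet> v)) (at x)"
    by (rule derivative_eq_intros K_poly_has_derivative rsq_has_derivative
        inverse_sqrt_nsq_has_derivative[OF assms] refl)+
      (simp add: fun_eq_iff gradK_def Let_def inner_vec_def sum_4 algebra_simps)
  then show ?thesis
    by (simp add: K_eq[abs_def])
qed

definition sympJ :: "real^4 \<Rightarrow> real^4" where
  "sympJ v = vector [v$3, v$4, - v$1, - v$2]"

lemma pd_eq_component:
  assumes "(f has_derivative (\<lambda>v. g \<bullet> v)) (at x)"
  shows "pd f i x = g $ i"
proof -
  have line: "((\<lambda>s. x + s *\<^sub>R axis i 1) has_derivative (\<lambda>s. s *\<^sub>R axis i 1)) (at 0)"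
    by (auto intro!: derivative_eq_intros)
  have "(f has_derivative (\<lambda>v. g \<bullet> v)) (at (x + 0 *\<^sub>R axis i 1))"
    using assms by simp
  from has_derivative_compose[OF line this]
  have "((\<lambda>s. f (x + s *\<^sub>R axis i 1)) has_real_derivative g $ i) (at 0)"
    unfolding has_field_derivative_def
    by (rule has_derivative_eq_rhs) (simp add: fun_eq_iff inner_axis)
  then show ?thesis
    unfolding pd_def by (rule DERIV_imp_deriv)
qed

lemma XK_eq_sympJ_gradK: "x \<in> noncollision \<Longrightarrow> XK \<mu> c x = sympJ (gradK \<mu> c x)"
  unfolding XK_def sympJ_def noncollision_def
  by (simp add: pd_eq_component[OF K_has_derivative])

lemma inner_sympJ_self: "v \<bullet> sympJ v = 0"
  by (simp add: sympJ_def inner_vec_def sum_4)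

lemma K_conserved:
  assumes "(y has_vector_derivative XK \<mu> c (y t)) (at t)" and "y t \<in> noncollision"
  shows "((\<lambda>s. K \<mu> c (y s)) has_real_derivative 0) (at t)"
proof -
  have "(y has_derivative (\<lambda>h. h *\<^sub>R sympJ (gradK \<mu> c (y t)))) (at t)"
    using assms by (simp add: has_vector_derivative_def XK_eq_sympJ_gradK)
  moreover have "(K \<mu> c has_derivative (\<lambda>v. gradK \<mu> c (y t) \<bullet> v)) (at (y t))"
    using assms(2) by (simp add: noncollision_def K_has_derivative)
  ultimately have "((\<lambda>s. K \<mu> c (y s)) has_derivative
      (\<lambda>h. gradK \<mu> c (y t) \<bullet> (h *\<^sub>R sympJ (gradK \<mu> c (y t))))) (at t)"
    by (rule has_derivative_compose)
  then show ?thesis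
    unfolding has_field_derivative_def
    by (rule has_derivative_eq_rhs) (simp add: fun_eq_iff inner_sympJ_self)
qed

lemma nsq_eq_0_imp_rsq:
  assumes "nsq x = 0"
  shows "rsq x = 1 / 2"
proof -
  have "(2 * (x$1)\<^sup>2 - 2 * (x$2)\<^sup>2 - 1)\<^sup>2 + (4 * x$1 * x$2)\<^sup>2 = 0"
    using assms by (simp add: nsq_def power_mult_distrib)
  then have re: "2 * (x$1)\<^sup>2 - 2 * (x$2)\<^sup>2 - 1 = 0" and "x$1 = 0 \<or> x$2 = 0"
    by simp_all
  moreover have "x$1 \<noteq> 0"
  proof
    assume "x$1 = 0"
    with re have "2 * (x$2)\<^sup>2 = - 1" by simp
    then show False
      using zero_le_power2[of "x$2"] by linarith
  qed
  ultimately have "x$2 = 0" by simp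
  with re show ?thesis
    by (simp add: rsq_def)
qed

lemma closed_LC_level:
  assumes "0 < \<mu>"
  shows "closed (LC_level \<mu> c)"
proof -
  have "x \<in> LC_level \<mu> c \<longleftrightarrow> \<mu> * rsq x = K_poly \<mu> c x * sqrt (nsq x)" for x
  proof (cases "nsq x = 0")
    case True
    \<comment> \<open>at a collision \<mu> |z|^2 = \<mu>/2 is nonzero, so the cleared equation fails\<close>
    then show ?thesis
      using assms nsq_eq_0_imp_rsq[OF True] by (simp add: LC_level_eq noncollision_def)
  next
    case False
    then have "0 < sqrt (nsq x)"
      using nsq_nonneg[of x] by simp
    then show ?thesis
      using False nsq_nonneg[of x] by (auto simp: LC_level_eq noncollision_def K_eq field_simps)
  qed
  then have "LC_level \<mu> c = {x. \<mu> * rsq x = K_poly \<mu> c x * sqrt (nsq x)}"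
    by blast
  also have "closed \<dots>"
  proof (intro closed_Collect_eq continuous_on_mult continuous_on_const)
    show "continuous_on UNIV rsq"
      by (rule continuous_on_rsq)
    show "continuous_on UNIV (K_poly \<mu> c)"
      unfolding K_poly_def[abs_def] by (intro continuous_intros continuous_on_rsq) auto
    show "continuous_on UNIV (\<lambda>x. sqrt (nsq x))"
      by (intro continuous_on_compose2[OF continuous_on_real_sqrt continuous_on_nsq]) auto
  qed
  finally show ?thesis .
qed

lemma local_lipschitz_sympJ_gradK:
  "local_lipschitz (UNIV :: real set) noncollision (\<lambda>_ x. sympJ (gradK \<mu> c x))"
proof (rule local_lipschitzI)
  fix x0 :: "real^4" assume "x0 \<in> noncollision"
  define \<delta> where "\<delta> = nsq x0 / 2"
  have "0 < \<delta>"
    using \<open>x0 \<in> noncollision\<close> by (simp add: \<delta>_def noncollision_def)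
  have "open {x. \<delta> < nsq x}"
    by (rule open_Collect_less[OF continuous_on_const continuous_on_nsq])
  moreover have "x0 \<in> {x. \<delta> < nsq x}"
    using \<open>0 < \<delta>\<close> by (simp add: \<delta>_def)
  ultimately obtain \<rho> where "0 < \<rho>" and \<rho>: "cball x0 \<rho> \<subseteq> {x. \<delta> < nsq x}"
    using open_contains_cball by blast
  have "lipschitzian_on (cball x0 \<rho>) nsq"
    unfolding nsq_def[abs_def]
    by (intro lipschitzian_on_add lipschitzian_on_diff lipschitzian_on_mult lipschitzian_on_power
        lipschitzian_on_const lipschitzian_on_vec_nth compact_cball)
  then have "lipschitzian_on (cball x0 \<rho>) (\<lambda>x. inverse (sqrt (nsq x)))"
    using \<rho> \<open>0 < \<delta>\<close> by (intro lipschitzian_on_inverse_sqrt[of _ _ \<delta>]) auto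
  then have "lipschitzian_on (cball x0 \<rho>) (\<lambda>x. sympJ (gradK \<mu> c x) $ i)" for i
    using exhaust_4[of i]
    by (auto simp: sympJ_def gradK_def Let_def rsq_def
        intro!: lipschitzian_on_add lipschitzian_on_diff lipschitzian_on_minus lipschitzian_on_mult
          lipschitzian_on_power lipschitzian_on_const lipschitzian_on_vec_nth)
  then have "lipschitzian_on (cball x0 \<rho>) (\<lambda>x. sympJ (gradK \<mu> c x))"
    by (rule lipschitzian_on_cart)
  then obtain L where "L-lipschitz_on (cball x0 \<rho>) (\<lambda>x. sympJ (gradK \<mu> c x))"
    unfolding lipschitzian_on_def by blast
  then show "\<exists>u>0. \<exists>L. \<forall>t\<in>cball t u \<inter> UNIV. L-lipschitz_on (cball x0 u \<inter> noncollision)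
      (\<lambda>x. sympJ (gradK \<mu> c x))" for t :: real
    using \<open>0 < \<rho>\<close> by (blast intro: lipschitz_on_subset)
qed

section \<open>The reversing symmetries\<close>

lemma Rplus_components [simp]:
  "Rplus x $ 1 = x$1" "Rplus x $ 2 = - x$2" "Rplus x $ 3 = - x$3" "Rplus x $ 4 = x$4"
  by (simp_all add: Rplus_def)

lemma Rminus_components [simp]:
  "Rminus x $ 1 = - x$1" "Rminus x $ 2 = x$2" "Rminus x $ 3 = x$3" "Rminus x $ 4 = - x$4"
  by (simp_all add: Rminus_def)

lemma bounded_linear_Rplus: "bounded_linear Rplus"
  and bounded_linear_Rminus: "bounded_linear Rminus"
  by (auto intro!: linear_conv_bounded_linear[THEN iffD1] linearI simp: vec4_eq_iff)

lemma Rplus_Rplus [simp]: "Rplus (Rplus x) = x"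
  and Rminus_Rplus: "Rminus (Rplus x) = - x"
  by (simp_all add: vec4_eq_iff)

lemma Rplus_fixed_iff: "Rplus x = x \<longleftrightarrow> x$2 = 0 \<and> x$3 = 0"
  and Rminus_fixed_iff: "Rminus x = x \<longleftrightarrow> x$1 = 0 \<and> x$4 = 0"
  by (auto simp: vec4_eq_iff)

lemma Rplus_noncollision: "Rplus ` noncollision \<subseteq> noncollision"
  and Rminus_noncollision: "Rminus ` noncollision \<subseteq> noncollision"
  by (auto simp: noncollision_def nsq_def)

lemma gradK_Rplus: "gradK \<mu> c (Rplus x) = Rplus (gradK \<mu> c x)"
  and gradK_Rminus: "gradK \<mu> c (Rminus x) = Rminus (gradK \<mu> c x)"
  by (simp_all add: vec4_eq_iff gradK_def Let_def rsq_def nsq_def algebra_simps)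

lemma sympJ_gradK_Rplus: "sympJ (gradK \<mu> c (Rplus x)) = - Rplus (sympJ (gradK \<mu> c x))"
  and sympJ_gradK_Rminus: "sympJ (gradK \<mu> c (Rminus x)) = - Rminus (sympJ (gradK \<mu> c x))"
  by (simp_all add: gradK_Rplus gradK_Rminus sympJ_def vec4_eq_iff)

section \<open>Symmetric periodic orbits\<close>

lemma Sigma_subset_LC_level: "Sigma \<mu> c \<subseteq> LC_level \<mu> c"
  unfolding Sigma_def using connected_component_subset by blast

lemma flow_line_in_LC_level:
  assumes "0 < \<mu>" and "is_flow \<mu> c Fl" and "p \<in> Sigma \<mu> c"
  shows "Fl t p \<in> LC_level \<mu> c"
proof -
  have sol: "((\<lambda>s. Fl s p) has_vector_derivative XK \<mu> c (Fl t p)) (at t)" for t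
    using assms(2,3) by (simp add: is_flow_def)
  have "Fl 0 p \<in> LC_level \<mu> c"
    using assms(2,3) subsetD[OF Sigma_subset_LC_level] by (simp add: is_flow_def)
  moreover have "continuous_on UNIV (\<lambda>s. Fl s p)"
    using sol by (auto intro: continuous_at_imp_continuous_on has_vector_derivative_continuous)
  ultimately show ?thesis
    using level_set_invariant[OF open_noncollision
        closed_LC_level[OF \<open>0 < \<mu>\<close>, unfolded LC_level_eq] _ K_conserved[OF sol], where a = 0]
    by (simp add: LC_level_eq)
qed

lemma flow_line_solution:
  assumes "0 < \<mu>" and "is_flow \<mu> c Fl" and "p \<in> Sigma \<mu> c"
  shows "((\<lambda>s. Fl s p) has_vector_derivative sympJ (gradK \<mu> c (Fl t p))) (at t)"
proof -
  have "((\<lambda>s. Fl s p) has_vector_derivative XK \<mu> c (Fl t p)) (at t)"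
    using assms(2,3) by (simp add: is_flow_def)
  moreover have "Fl t p \<in> noncollision"
    using flow_line_in_LC_level[OF assms] by (simp add: LC_level_eq)
  ultimately show ?thesis
    by (simp add: XK_eq_sympJ_gradK)
qed

lemma flow_line_reversible:
  assumes "0 < \<mu>" and "is_flow \<mu> c Fl" and "p \<in> Sigma \<mu> c"
    and "R \<in> {Rminus, Rplus}" and "R (Fl a p) = Fl a p"
  shows "Fl (a + t) p = R (Fl (a - t) p)"
proof -
  have "Fl s p \<in> noncollision" for s
    using flow_line_in_LC_level[OF assms(1-3)] by (simp add: LC_level_eq)
  note reversible = reversible_solution_symmetric[OF local_lipschitz_sympJ_gradK _ _ _
      flow_line_solution[OF assms(1-3)] this]
  show ?thesis
    using assms(4,5) reversible[OF bounded_linear_Rminus sympJ_gradK_Rminus Rminus_noncollision]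
      reversible[OF bounded_linear_Rplus sympJ_gradK_Rplus Rplus_noncollision] by auto
qed

lemma zero_slope_hit_fixed:
  assumes "(first_hit_transverse \<mu> c Fl (S_minus \<mu> c) 1 I \<tau> \<and> slope = (\<lambda>q. Fl (\<tau> q) q $ 4))
       \<or> (first_hit_transverse \<mu> c Fl (S_plus \<mu> c) 2 I \<tau> \<and> slope = (\<lambda>q. Fl (\<tau> q) q $ 3))"
    and "p \<in> I" and "slope p = 0"
  shows "0 < \<tau> p \<and> (\<exists>R \<in> {Rminus, Rplus}. R (Fl (\<tau> p) p) = Fl (\<tau> p) p)"
  using assms
  by (auto simp: first_hit_transverse_def S_minus_def S_plus_def Rminus_fixed_iff Rplus_fixed_iff)

lemma symmetric_periodic_pointI:
  assumes "0 < T" and "\<And>t. Fl (t + T) p = Fl t p" and "\<And>t. Fl (- t) p = Rplus (Fl t p)"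
  shows "symmetric_periodic_point Fl p"
proof -
  have "Rplus (Fl (T - t + 0) p) = Fl (t + 0) p" for t
    using assms(2)[of "- t"] assms(3)[of t] by simp
  then show ?thesis
    using assms(1,2) unfolding symmetric_periodic_point_def by blast
qed

theorem lemma3p2:
  fixes \<mu> c :: real
    and Fl :: "real \<Rightarrow> real^4 \<Rightarrow> real^4"
    and g :: "real \<Rightarrow> real^4"
    and \<tau> :: "real^4 \<Rightarrow> real"
    and slope :: "real^4 \<Rightarrow> real"
    and p0 :: "real^4"
  assumes "0 < \<mu>" and "\<mu> < 1"
    and "below_critical \<mu> c"
    and "is_flow \<mu> c Fl"
    and "arc g" and "path_image g \<subseteq> C_plus \<mu> c"
    and "(first_hit_transverse \<mu> c Fl (S_minus \<mu> c) 1 (path_image g) \<tau> \<and>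
           slope = (\<lambda>q. Fl (\<tau> q) q $ 4))
       \<or> (first_hit_transverse \<mu> c Fl (S_plus \<mu> c) 2 (path_image g) \<tau> \<and>
           slope = (\<lambda>q. Fl (\<tau> q) q $ 3))"
    and "p0 \<in> path_image g" and "slope p0 = 0"
  shows "symmetric_periodic_point Fl p0"
proof -
  have "p0 \<in> Sigma \<mu> c" and "Rplus p0 = p0"
    using assms(6,8) by (auto simp: C_plus_def Rplus_fixed_iff)
  moreover have "Fl 0 p0 = p0"
    using assms(4) \<open>p0 \<in> Sigma \<mu> c\<close> by (simp add: is_flow_def)
  ultimately have sym0: "Fl (0 + t) p0 = Rplus (Fl (0 - t) p0)" for t
    by (intro flow_line_reversible[OF assms(1,4)]) simp_all
  obtain R where R: "R \<in> {Rminus, Rplus}" and "0 < \<tau> p0" and "R (Fl (\<tau> p0) p0) = Fl (\<tau> p0) p0"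
    using zero_slope_hit_fixed[OF assms(7-9)] by blast
  then have "Fl (\<tau> p0 + t) p0 = R (Fl (\<tau> p0 - t) p0)" for t
    using flow_line_reversible[OF assms(1,4) \<open>p0 \<in> Sigma \<mu> c\<close>] by blast
  moreover have "R (Rplus (R (Rplus x))) = x" for x
    using R by (auto simp: Rminus_Rplus)
  ultimately have "Fl (t + 4 * \<tau> p0) p0 = Fl t p0" for t
    by (rule doubly_symmetric_periodic[where y = "\<lambda>s. Fl s p0", OF sym0])
  moreover have "Fl (- t) p0 = Rplus (Fl t p0)" for t
    using sym0[of "- t"] by simp
  ultimately show ?thesis
    using \<open>0 < \<tau> p0\<close> by (intro symmetric_periodic_pointI[of "4 * \<tau> p0"]) auto
qed

end
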